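(* Let $E\subseteq Z$ be nonempty, $\gamma\in\Delta^\circ(E)$, $i\in\mathcal I$ and $\theta,\theta'\in\Theta$. Then $$\big[\mathcal L_i^Y(\eta,\theta)\subseteq\mathcal L_i^Y(\eta,\theta')\text{ for all }\eta\in\Delta(E)\big]\iff\mathcal L_i^Y(\gamma,\theta)\subseteq\mathcal L_i^Y(\gamma,\theta').$$
   Context: $Z$ is a finite set, $Y=\Delta(Z)$, $\mathcal I$ a finite set of agents, $\Theta$ a set of states; for each $(i,\theta)$, $u_i^\theta:Z\to\mathbb R$ and $U_i^\theta(y)=\sum_zy_zu_i^\theta(z)$. $\mathcal L_i^Y(\alpha,\theta)=\{y\in Y:U_i^\theta(\alpha)\ge U_i^\theta(y)\}$. For nonempty $E\subseteq Z$, $\Delta(E)$ is the set of lotteries supported in $E$ and $\Delta^\circ(E)$ the set of lotteries whose support is exactly $E$. *)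

theory Defs
  imports "HOL-Probability.Probability_Mass_Function"
begin

text \<open>Outcomes Z are a finite type; lotteries Y = Delta(Z) are pmfs on Z.\<close>

definition expU :: "('z::finite \<Rightarrow> real) \<Rightarrow> 'z pmf \<Rightarrow> real" where
  "expU u y = (\<Sum>z\<in>UNIV. pmf y z * u z)"

definition lowerY :: "('i \<Rightarrow> 'th \<Rightarrow> 'z::finite \<Rightarrow> real) \<Rightarrow> 'i \<Rightarrow> 'z pmf \<Rightarrow> 'th \<Rightarrow> 'z pmf set" where
  "lowerY u i \<alpha> \<theta> = {y. expU (u i \<theta>) \<alpha> \<ge> expU (u i \<theta>) y}"

definition Delta :: "'z set \<Rightarrow> 'z pmf set" where
  "Delta E = {p. set_pmf p \<subseteq> E}"

definition Delta_circ :: "'z set \<Rightarrow> 'z pmf set" where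
  "Delta_circ E = {p. set_pmf p = E}"

end

theory Submission
  imports Defs
begin

text \<open>If \<open>\<gamma>\<close> has full support on \<open>E\<close> and \<open>\<eta>\<in>\<Delta>(E)\<close>, then for any lottery \<open>y\<close> and small
  \<open>e > 0\<close> the vector \<open>\<gamma> + e (y - \<eta>)\<close> is again a lottery. Expected utility is linear, so
  \<open>y\<close> is below \<open>\<eta>\<close> for a utility exactly when this lottery is below \<open>\<gamma>\<close>; hence the
  ordering of lower contour sets at \<open>\<gamma>\<close> transfers to every \<open>\<eta>\<close> supported in \<open>E\<close>.\<close>

lemma pmf_bounded_below_on_support:
  fixes \<gamma> :: "'z::finite pmf"
  obtains e where "e > 0" and "\<And>z. z \<in> set_pmf \<gamma> \<Longrightarrow> e \<le> pmf \<gamma> z"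
proof
  show "Min (pmf \<gamma> ` set_pmf \<gamma>) > 0"
    using set_pmf_not_empty[of \<gamma>] by (simp add: pmf_positive)
  show "Min (pmf \<gamma> ` set_pmf \<gamma>) \<le> pmf \<gamma> z" if "z \<in> set_pmf \<gamma>" for z
    using that by simp
qed

lemma sum_pmf_UNIV [simp]: "(\<Sum>z\<in>UNIV. pmf p z) = 1" for p :: "'z::finite pmf"
  by (rule sum_pmf_eq_1) auto

lemma expU_perturbation_exists:
  fixes \<gamma> \<eta> y :: "'z::finite pmf"
  assumes "set_pmf \<eta> \<subseteq> set_pmf \<gamma>"
  obtains e y' where "e > 0"
    and "\<And>w. expU w y' = expU w \<gamma> + e * (expU w y - expU w \<eta>)"
proof -
  obtain e where e_pos: "e > 0" and e_le: "\<And>z. z \<in> set_pmf \<gamma> \<Longrightarrow> e \<le> pmf \<gamma> z"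
    using pmf_bounded_below_on_support[of \<gamma>] by blast
  define f where "f z = pmf \<gamma> z + e * (pmf y z - pmf \<eta> z)" for z
  have f_nonneg: "0 \<le> f z" for z
  proof (cases "z \<in> set_pmf \<gamma>")
    case True
    have "e * pmf \<eta> z \<le> e"
      using e_pos pmf_le_1[of \<eta> z] by (simp add: mult_left_le)
    moreover have "0 \<le> e * pmf y z" using e_pos by simp
    ultimately show ?thesis
      using e_le[OF True] unfolding f_def by (simp add: algebra_simps)
  next
    case False
    then have "pmf \<eta> z = 0" using assms by (auto simp: set_pmf_iff)
    then show ?thesis unfolding f_def using e_pos by simp
  qed
  have "sum f UNIV = 1"
    unfolding f_def by (simp add: sum.distrib sum_subtractf flip: sum_distrib_left)
  then have "(\<integral>\<^sup>+z. f z \<partial>count_space UNIV) = 1"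
    by (simp add: nn_integral_count_space_finite f_nonneg)
  then have pmf_y': "pmf (embed_pmf f) z = f z" for z
    by (rule pmf_embed_pmf[OF f_nonneg])
  show ?thesis
  proof
    show "e > 0" by (fact e_pos)
    show "expU w (embed_pmf f) = expU w \<gamma> + e * (expU w y - expU w \<eta>)" for w
      unfolding expU_def pmf_y' f_def
      by (simp add: algebra_simps sum.distrib sum_subtractf sum_distrib_left)
  qed
qed

lemma lowerY_subset_transfer:
  assumes "set_pmf \<eta> \<subseteq> set_pmf \<gamma>"
    and "lowerY u i \<gamma> \<theta> \<subseteq> lowerY u i \<gamma> \<theta>'"
  shows "lowerY u i \<eta> \<theta> \<subseteq> lowerY u i \<eta> \<theta>'"
proof
  fix y assume "y \<in> lowerY u i \<eta> \<theta>"
  then have y_below: "expU (u i \<theta>) y \<le> expU (u i \<theta>) \<eta>"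
    by (simp add: lowerY_def)
  obtain e y' where e_pos: "e > 0"
    and expU_y': "\<And>w. expU w y' = expU w \<gamma> + e * (expU w y - expU w \<eta>)"
    using expU_perturbation_exists[OF assms(1), of y] by blast
  have "y' \<in> lowerY u i \<gamma> \<theta>"
    using e_pos y_below by (simp add: lowerY_def expU_y' mult_le_0_iff)
  with assms(2) have "y' \<in> lowerY u i \<gamma> \<theta>'" by blast
  then have "e * (expU (u i \<theta>') y - expU (u i \<theta>') \<eta>) \<le> 0"
    by (simp add: lowerY_def expU_y')
  then show "y \<in> lowerY u i \<eta> \<theta>'"
    using e_pos by (simp add: lowerY_def mult_le_0_iff)
qed

theorem lemma11:
  fixes u :: "'i \<Rightarrow> 'th \<Rightarrow> 'z::finite \<Rightarrow> real"
    and E :: "'z set" and \<gamma> :: "'z pmf" and i :: 'i and \<theta> \<theta>' :: 'th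
  assumes "E \<noteq> {}" and "\<gamma> \<in> Delta_circ E"
  shows "(\<forall>\<eta>\<in>Delta E. lowerY u i \<eta> \<theta> \<subseteq> lowerY u i \<eta> \<theta>')
         \<longleftrightarrow> lowerY u i \<gamma> \<theta> \<subseteq> lowerY u i \<gamma> \<theta>'"
proof
  have "\<gamma> \<in> Delta E" using assms(2) by (simp add: Delta_def Delta_circ_def)
  then show "lowerY u i \<gamma> \<theta> \<subseteq> lowerY u i \<gamma> \<theta>'"
    if "\<forall>\<eta>\<in>Delta E. lowerY u i \<eta> \<theta> \<subseteq> lowerY u i \<eta> \<theta>'"
    using that by blast
next
  show "\<forall>\<eta>\<in>Delta E. lowerY u i \<eta> \<theta> \<subseteq> lowerY u i \<eta> \<theta>'"
    if "lowerY u i \<gamma> \<theta> \<subseteq> lowerY u i \<gamma> \<theta>'"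
    using that assms(2) lowerY_subset_transfer[of _ \<gamma> u i \<theta> \<theta>']
    by (simp add: Delta_def Delta_circ_def)
qed

end
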